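(* Suppose $n_1,n_2,n_3,\dots$ is a sequence of positive integers with $\lim_{i\to\infty}n_i=\infty$. Then $\bigcap_{i=1}^\infty I\Lambda_{n_i}=0$.
   Context: $I\Lambda_n$ is the ideal of $\mathbb{Z}[x_1,\dots,x_n]$ generated by the polynomials that are symmetric in $x_1,\dots,x_n$ and have zero constant term; all these ideals are regarded as subsets of $\mathbb{Z}[x_1,x_2,\dots]$. *)

theory Defs
  imports Complex_Main "HOL-Library.Poly_Mapping" "HOL-Combinatorics.Permutations"
begin

text \<open>Polynomials in Z[x_1, x_2, ...]: finitely supported maps from monomials
  (finitely supported exponent vectors nat =>0 nat) to integer coefficients.\<close>
type_synonym zpoly = "(nat \<Rightarrow>\<^sub>0 nat) \<Rightarrow>\<^sub>0 int"

definition in_vars :: "nat \<Rightarrow> zpoly \<Rightarrow> bool" where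
  "in_vars n p \<longleftrightarrow> (\<forall>m \<in> Poly_Mapping.keys p. Poly_Mapping.keys m \<subseteq> {1..n})"

definition symmetric_in :: "nat \<Rightarrow> zpoly \<Rightarrow> bool" where
  "symmetric_in n p \<longleftrightarrow>
     (\<forall>\<sigma>. \<sigma> permutes {1..n} \<longrightarrow>
        (\<forall>(m::nat \<Rightarrow>\<^sub>0 nat) (m'::nat \<Rightarrow>\<^sub>0 nat). (\<forall>i. Poly_Mapping.lookup m' i = Poly_Mapping.lookup m (\<sigma> i)) \<longrightarrow> Poly_Mapping.lookup p m' = Poly_Mapping.lookup p m))"

definition sym_gen :: "nat \<Rightarrow> zpoly \<Rightarrow> bool" where
  "sym_gen n g \<longleftrightarrow> in_vars n g \<and> symmetric_in n g \<and> Poly_Mapping.lookup g 0 = 0"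

definition ILambda :: "nat \<Rightarrow> zpoly set" where
  "ILambda n = {(\<Sum>j\<in>J. a j * g j) | J a g.
      finite (J :: nat set) \<and> (\<forall>j\<in>J. in_vars n (a j) \<and> sym_gen n (g j))}"

end

theory Submission
  imports Defs
begin

text \<open>
  Suppose \<open>p \<noteq> 0\<close> lies in \<open>I\<Lambda>\<^sub>N\<close> for all \<open>N = n\<^sub>i\<close>, involves only \<open>x\<^sub>1, \<dots>, x\<^sub>k\<close> and has a
  monomial of degree \<open>d\<close>. Take such an \<open>N\<close> with \<open>M = N div k > d\<close>, a primitive \<open>M\<close>-th root of
  unity \<open>\<zeta>\<close>, and the ring map \<open>x\<^sub>q\<^sub>k\<^sub>+\<^sub>r \<mapsto> \<zeta>\<^sup>q x\<^sub>r\<close> (\<open>q < M\<close>, \<open>1 \<le> r \<le> k\<close>), \<open>x\<^sub>j \<mapsto> 0\<close>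
  (\<open>kM < j \<le> N\<close>); it fixes \<open>p\<close>. Shifting the \<open>M\<close> blocks of \<open>k\<close> variables cyclically permutes
  \<open>x\<^sub>1, \<dots>, x\<^sub>N\<close>, and composing the map with this shift amounts to multiplying every variable
  by \<open>\<zeta>\<close>. Hence the map multiplies the degree-\<open>t\<close> part of the image of a symmetric polynomial
  by \<open>\<zeta>\<^sup>t\<close>, which kills it unless \<open>M\<close> divides \<open>t\<close>. With zero constant term the image has no
  monomial of degree below \<open>M\<close>, so neither has the image of any element of \<open>I\<Lambda>\<^sub>N\<close>, such as \<open>p\<close>.
\<close>

lemma single_eq_zero_iff [simp]: "Poly_Mapping.single k v = 0 \<longleftrightarrow> v = 0"
  by (metis lookup_single_eq single_zero)

lemma sum_single_lookup:
  "(\<Sum>k\<in>Poly_Mapping.keys f. Poly_Mapping.single k (Poly_Mapping.lookup f k)) = f"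
  by (rule poly_mapping_eqI) (auto simp: lookup_sum lookup_single when_def in_keys_iff)

definition mon_degree :: "('a \<Rightarrow>\<^sub>0 nat) \<Rightarrow> nat" where
  "mon_degree m = (\<Sum>i. Poly_Mapping.lookup m i)"

lemma mon_degree_eq_sum_keys:
  "mon_degree m = (\<Sum>i\<in>Poly_Mapping.keys m. Poly_Mapping.lookup m i)"
  unfolding mon_degree_def by (rule Sum_any.expand_superset) (auto simp: in_keys_iff)

lemma mon_degree_zero [simp]: "mon_degree 0 = 0"
  by (simp add: mon_degree_def)

lemma mon_degree_single [simp]: "mon_degree (Poly_Mapping.single i d) = d"
  by (simp add: mon_degree_def lookup_single)

lemma mon_degree_add: "mon_degree (m + l) = mon_degree m + mon_degree l"
  by (simp add: mon_degree_def lookup_add Sum_any.distrib)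

lemma mon_degree_sum: "mon_degree (\<Sum>i\<in>S. f i) = (\<Sum>i\<in>S. mon_degree (f i))"
  by (induction S rule: infinite_finite_induct) (simp_all add: mon_degree_add)

lemma mon_degree_eq_0_iff [simp]: "mon_degree m = 0 \<longleftrightarrow> m = 0"
  by (auto simp: mon_degree_def fun_eq_iff poly_mapping_eqI)

definition rename_mon :: "('a \<Rightarrow> 'b) \<Rightarrow> ('a \<Rightarrow>\<^sub>0 nat) \<Rightarrow> ('b \<Rightarrow>\<^sub>0 nat)" where
  "rename_mon b m = (\<Sum>i. Poly_Mapping.single (b i) (Poly_Mapping.lookup m i))"

lemma rename_mon_eq_sum_keys:
  "rename_mon b m = (\<Sum>i\<in>Poly_Mapping.keys m. Poly_Mapping.single (b i) (Poly_Mapping.lookup m i))"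
  unfolding rename_mon_def by (rule Sum_any.expand_superset) (auto simp: in_keys_iff)

lemma rename_mon_add: "rename_mon b (m + l) = rename_mon b m + rename_mon b l"
  unfolding rename_mon_def lookup_add single_add by (rule Sum_any.distrib) auto

lemma rename_mon_id [simp]: "rename_mon (\<lambda>i. i) m = m"
  by (simp add: rename_mon_eq_sum_keys sum_single_lookup)

lemma rename_mon_cong:
  "(\<And>i. i \<in> Poly_Mapping.keys m \<Longrightarrow> b i = b' i) \<Longrightarrow> rename_mon b m = rename_mon b' m"
  unfolding rename_mon_def by (rule Sum_any.cong) (metis in_keys_iff single_zero)

lemma mon_degree_rename_mon [simp]: "mon_degree (rename_mon b m) = mon_degree m"
  by (simp add: rename_mon_eq_sum_keys mon_degree_sum) (simp add: mon_degree_eq_sum_keys)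

lemma rename_mon_comp_bij:
  assumes "bij \<tau>"
  shows "rename_mon (b \<circ> \<tau>) m = rename_mon b (Poly_Mapping.map_key (inv \<tau>) m)"
proof -
  have "inj (inv \<tau>)"
    using assms bij_imp_bij_inv bij_is_inj by blast
  show ?thesis
    unfolding rename_mon_def map_key.rep_eq[OF \<open>inj (inv \<tau>)\<close>]
    by (rule Sum_any.reindex_cong[OF assms, symmetric]) (simp add: fun_eq_iff bij_is_inj assms)
qed

definition mon_eval :: "('a \<Rightarrow> 'c::comm_monoid_mult) \<Rightarrow> ('a \<Rightarrow>\<^sub>0 nat) \<Rightarrow> 'c" where
  "mon_eval c m = (\<Prod>i. c i ^ Poly_Mapping.lookup m i)"

lemma finite_power_lookup_neq_one: "finite {i. c i ^ Poly_Mapping.lookup m i \<noteq> 1}"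
  by (rule finite_subset[OF _ finite_lookup[of m]]) (auto intro: ccontr)

lemma mon_eval_add: "mon_eval c (m + l) = mon_eval c m * mon_eval c l"
  unfolding mon_eval_def lookup_add power_add
  by (rule Prod_any.distrib) (simp_all add: finite_power_lookup_neq_one)

lemma mon_eval_one [simp]: "mon_eval (\<lambda>i. 1) m = 1"
  by (simp add: mon_eval_def)

lemma mon_eval_cong:
  "(\<And>i. i \<in> Poly_Mapping.keys m \<Longrightarrow> c i = c' i) \<Longrightarrow> mon_eval c m = mon_eval c' m"
  unfolding mon_eval_def by (rule Prod_any.cong) (metis in_keys_iff power_0)

lemma mon_eval_scale: "mon_eval (\<lambda>i. z * c i) m = z ^ mon_degree m * mon_eval c m"
  unfolding mon_eval_def mon_degree_def power_mult_distrib
  by (simp add: Prod_any.distrib finite_power_lookup_neq_one power_Sum_any)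

lemma mon_eval_comp_bij:
  assumes "bij \<tau>"
  shows "mon_eval (c \<circ> \<tau>) m = mon_eval c (Poly_Mapping.map_key (inv \<tau>) m)"
proof -
  have "inj (inv \<tau>)"
    using assms bij_imp_bij_inv bij_is_inj by blast
  show ?thesis
    unfolding mon_eval_def map_key.rep_eq[OF \<open>inj (inv \<tau>)\<close>]
    by (rule Prod_any.reindex_cong[OF assms, symmetric]) (simp add: fun_eq_iff bij_is_inj assms)
qed

lemma rename_mon_eq_0_iff [simp]: "rename_mon b m = 0 \<longleftrightarrow> m = 0"
  by (metis mon_degree_eq_0_iff mon_degree_rename_mon)

lemma mon_eval_zero [simp]: "mon_eval c 0 = 1"
  by (simp add: mon_eval_def)

text \<open>The ring homomorphism \<open>\<int>[x] \<rightarrow> R[y]\<close> given by \<open>x\<^sub>i \<mapsto> c\<^sub>i y\<^sub>b\<^sub>(\<^sub>i\<^sub>)\<close>.\<close>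

definition subst_poly ::
    "('a \<Rightarrow> 'b) \<Rightarrow> ('a \<Rightarrow> 'c::comm_ring_1) \<Rightarrow> (('a \<Rightarrow>\<^sub>0 nat) \<Rightarrow>\<^sub>0 int) \<Rightarrow> ('b \<Rightarrow>\<^sub>0 nat) \<Rightarrow>\<^sub>0 'c" where
  "subst_poly b c f =
     (\<Sum>m. Poly_Mapping.single (rename_mon b m) (of_int (Poly_Mapping.lookup f m) * mon_eval c m))"

lemma subst_poly_eq_sum_keys:
  "subst_poly b c f = (\<Sum>m\<in>Poly_Mapping.keys f.
     Poly_Mapping.single (rename_mon b m) (of_int (Poly_Mapping.lookup f m) * mon_eval c m))"
  unfolding subst_poly_def by (rule Sum_any.expand_superset) (auto simp: in_keys_iff)

lemma subst_poly_add: "subst_poly b c (f + g) = subst_poly b c f + subst_poly b c g"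
proof -
  have "finite {m. of_int (Poly_Mapping.lookup h m) * mon_eval c m \<noteq> 0}" for h
    by (rule finite_subset[OF _ finite_lookup[of h]]) auto
  then show ?thesis
    unfolding subst_poly_def lookup_add of_int_add distrib_right single_add
    by (intro Sum_any.distrib) simp_all
qed

lemma subst_poly_zero [simp]: "subst_poly b c 0 = 0"
  by (simp add: subst_poly_def)

lemma subst_poly_sum: "subst_poly b c (\<Sum>i\<in>S. f i) = (\<Sum>i\<in>S. subst_poly b c (f i))"
  by (induction S rule: infinite_finite_induct) (simp_all add: subst_poly_add)

lemma subst_poly_single:
  "subst_poly b c (Poly_Mapping.single m a) =
     Poly_Mapping.single (rename_mon b m) (of_int a * mon_eval c m)"
  by (cases "a = 0") (simp_all add: subst_poly_eq_sum_keys)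

lemma subst_poly_mult: "subst_poly b c (f * g) = subst_poly b c f * subst_poly b c g"
proof -
  let ?F = "Poly_Mapping.keys f" and ?G = "Poly_Mapping.keys g"
  have "f * g = (\<Sum>m\<in>?F. Poly_Mapping.single m (Poly_Mapping.lookup f m)) *
                (\<Sum>l\<in>?G. Poly_Mapping.single l (Poly_Mapping.lookup g l))"
    by (simp only: sum_single_lookup)
  also have "\<dots> = (\<Sum>m\<in>?F. \<Sum>l\<in>?G.
      Poly_Mapping.single (m + l) (Poly_Mapping.lookup f m * Poly_Mapping.lookup g l))"
    by (simp add: sum_product mult_single)
  finally have "subst_poly b c (f * g) = (\<Sum>m\<in>?F. \<Sum>l\<in>?G.
      Poly_Mapping.single (rename_mon b m) (of_int (Poly_Mapping.lookup f m) * mon_eval c m) *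
      Poly_Mapping.single (rename_mon b l) (of_int (Poly_Mapping.lookup g l) * mon_eval c l))"
    by (simp add: subst_poly_sum subst_poly_single mult_single rename_mon_add mon_eval_add mult_ac)
  also have "\<dots> = subst_poly b c f * subst_poly b c g"
    by (simp add: subst_poly_eq_sum_keys sum_product)
  finally show ?thesis .
qed

lemma lookup_subst_poly:
  "Poly_Mapping.lookup (subst_poly b c f) n =
     (\<Sum>m\<in>Poly_Mapping.keys f.
        of_int (Poly_Mapping.lookup f m) * mon_eval c m when rename_mon b m = n)"
  by (simp add: subst_poly_eq_sum_keys lookup_sum lookup_single)

lemma lookup_subst_poly_zero:
  "Poly_Mapping.lookup (subst_poly b c f) 0 = of_int (Poly_Mapping.lookup f 0)"
  by (simp add: lookup_subst_poly when_def in_keys_iff)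

lemma lookup_subst_poly_scale:
  "Poly_Mapping.lookup (subst_poly b (\<lambda>i. z * c i) f) n =
     z ^ mon_degree n * Poly_Mapping.lookup (subst_poly b c f) n"
  unfolding lookup_subst_poly sum_distrib_left
  by (rule sum.cong) (auto simp: when_def mon_eval_scale)

lemma subst_poly_cong:
  assumes "\<And>m i. m \<in> Poly_Mapping.keys f \<Longrightarrow> i \<in> Poly_Mapping.keys m \<Longrightarrow> b i = b' i \<and> c i = c' i"
  shows "subst_poly b c f = subst_poly b' c' f"
proof -
  have "rename_mon b m = rename_mon b' m" "mon_eval c m = mon_eval c' m"
    if "m \<in> Poly_Mapping.keys f" for m
    using assms[OF that] by (blast intro: rename_mon_cong mon_eval_cong)+
  then show ?thesis
    by (simp add: subst_poly_eq_sum_keys)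
qed

lemma lookup_subst_poly_fixing_vars:
  assumes "\<And>m i. m \<in> Poly_Mapping.keys f \<Longrightarrow> i \<in> Poly_Mapping.keys m \<Longrightarrow> b i = i \<and> c i = 1"
  shows "Poly_Mapping.lookup (subst_poly b c f) n = of_int (Poly_Mapping.lookup f n)"
proof -
  have "subst_poly b c f = subst_poly (\<lambda>i. i) (\<lambda>i. 1) f"
    using assms by (rule subst_poly_cong)
  then show ?thesis
    by (simp add: lookup_subst_poly when_def in_keys_iff)
qed

lemma lookup_map_key_symmetric:
  assumes "symmetric_in N g" "\<sigma> permutes {1..N}"
  shows "Poly_Mapping.lookup g (Poly_Mapping.map_key \<sigma> m) = Poly_Mapping.lookup g m"
  using assms permutes_inj[OF assms(2)] unfolding symmetric_in_def by (simp add: map_key.rep_eq)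

lemma subst_poly_comp_permutes:
  assumes "symmetric_in N g" "\<tau> permutes {1..N}"
  shows "subst_poly (b \<circ> \<tau>) (c \<circ> \<tau>) g = subst_poly b c g"
proof -
  let ?push = "Poly_Mapping.map_key (inv \<tau>)"
  have bij: "bij \<tau>" and inj: "inj \<tau>" "inj (inv \<tau>)"
    using assms(2) permutes_bij permutes_inj permutes_inv by blast+
  have inverse: "inv \<tau> \<circ> \<tau> = (\<lambda>x. x)" "\<tau> \<circ> inv \<tau> = (\<lambda>x. x)"
    using bij by (simp_all add: bij_is_inj bij_is_surj flip: id_def inj_iff surj_iff)
  have "bij ?push"
    by (intro o_bij[of "Poly_Mapping.map_key \<tau>"])
      (simp_all add: fun_eq_iff map_key_compose inj inverse map_key_id)
  moreover have "Poly_Mapping.lookup g (?push m) = Poly_Mapping.lookup g m" for m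
    using assms(1) permutes_inv[OF assms(2)] by (rule lookup_map_key_symmetric)
  ultimately show ?thesis
    unfolding subst_poly_def rename_mon_comp_bij[OF bij] mon_eval_comp_bij[OF bij]
    by (intro Sum_any.reindex_cong[symmetric]) (auto simp: fun_eq_iff)
qed

lemma keys_mult_mon_degree_ge:
  assumes "\<And>l. l \<in> Poly_Mapping.keys g \<Longrightarrow> M \<le> mon_degree l" "n \<in> Poly_Mapping.keys (f * g)"
  shows "M \<le> mon_degree n"
proof -
  obtain k l where "n = k + l" "l \<in> Poly_Mapping.keys g"
    using keys_mult[of f g] assms(2) by blast
  then show ?thesis
    using assms(1)[of l] by (simp add: mon_degree_add)
qed

lemma keys_subst_poly_sym_gen_mon_degree_ge:
  fixes z :: "'c::idom"
  assumes "sym_gen N g" and "\<tau> permutes {1..N}"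
    and "\<And>i. i \<in> {1..N} \<Longrightarrow> b (\<tau> i) = b i"
    and "\<And>i. i \<in> {1..N} \<Longrightarrow> c (\<tau> i) = z * c i"
    and "\<And>t. 0 < t \<Longrightarrow> t < M \<Longrightarrow> z ^ t \<noteq> 1"
    and "n \<in> Poly_Mapping.keys (subst_poly b c g)"
  shows "M \<le> mon_degree n"
proof -
  have "subst_poly b c g = subst_poly (b \<circ> \<tau>) (c \<circ> \<tau>) g"
    using assms(1) subst_poly_comp_permutes[OF _ assms(2)] unfolding sym_gen_def by metis
  also have "\<dots> = subst_poly b (\<lambda>i. z * c i) g"
  proof (rule subst_poly_cong)
    fix m i
    assume "m \<in> Poly_Mapping.keys g" "i \<in> Poly_Mapping.keys m"
    then have "i \<in> {1..N}"
      using assms(1) unfolding sym_gen_def in_vars_def by blast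
    then show "(b \<circ> \<tau>) i = b i \<and> (c \<circ> \<tau>) i = z * c i"
      using assms(3,4) by simp
  qed
  finally have "Poly_Mapping.lookup (subst_poly b c g) n =
      z ^ mon_degree n * Poly_Mapping.lookup (subst_poly b c g) n"
    by (metis lookup_subst_poly_scale)
  with assms(6) have "z ^ mon_degree n = 1"
    by (simp add: in_keys_iff)
  moreover have "n \<noteq> 0"
    using assms(1,6) by (auto simp: sym_gen_def in_keys_iff lookup_subst_poly_zero)
  ultimately show ?thesis
    using assms(5) by (metis mon_degree_eq_0_iff not_le not_gr0)
qed

lemma keys_subst_poly_ILambda_mon_degree_ge:
  fixes z :: "'c::idom"
  assumes "p \<in> ILambda N" and "\<tau> permutes {1..N}"
    and "\<And>i. i \<in> {1..N} \<Longrightarrow> b (\<tau> i) = b i"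
    and "\<And>i. i \<in> {1..N} \<Longrightarrow> c (\<tau> i) = z * c i"
    and "\<And>t. 0 < t \<Longrightarrow> t < M \<Longrightarrow> z ^ t \<noteq> 1"
    and "n \<in> Poly_Mapping.keys (subst_poly b c p)"
  shows "M \<le> mon_degree n"
proof -
  obtain J :: "nat set" and a g
    where p: "p = (\<Sum>j\<in>J. a j * g j)" and sym: "\<And>j. j \<in> J \<Longrightarrow> sym_gen N (g j)"
    using assms(1) unfolding ILambda_def mem_Collect_eq by blast
  obtain j where j: "j \<in> J"
    and n: "n \<in> Poly_Mapping.keys (subst_poly b c (a j) * subst_poly b c (g j))"
    using assms(6) keys_sum[of "\<lambda>j. subst_poly b c (a j) * subst_poly b c (g j)" J]
    unfolding p subst_poly_sum subst_poly_mult by blast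
  show ?thesis
  proof (rule keys_mult_mon_degree_ge[OF _ n])
    fix l
    assume "l \<in> Poly_Mapping.keys (subst_poly b c (g j))"
    with sym[OF j] assms(2-5) show "M \<le> mon_degree l"
      by (rule keys_subst_poly_sym_gen_mon_degree_ge)
  qed
qed

lemma block_rotation_exists:
  fixes z :: "'c::comm_ring_1"
  assumes "z ^ M = 1" "0 < k" "0 < M" "k * M \<le> N"
  obtains \<tau> b c where "\<tau> permutes {1..N}"
    and "\<And>i. i \<in> {1..N} \<Longrightarrow> b (\<tau> i) = b i"
    and "\<And>i. i \<in> {1..N} \<Longrightarrow> c (\<tau> i) = z * c i"
    and "\<And>i. i \<le> k \<Longrightarrow> b i = i \<and> c i = 1"
proof -
  txt \<open>The variables \<open>x\<^sub>1, \<dots>, x\<^sub>k\<^sub>M\<close> form \<open>M\<close> consecutive blocks of length \<open>k\<close>; \<open>\<tau>\<close> moves each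
    block to the next one, cyclically, \<open>b\<close> gives the position inside the block and \<open>c\<close> is
    \<open>z\<close> to the power of the block index.\<close>
  define K where "K = k * M"
  define \<tau> where "\<tau> i = (if i \<in> {1..K} then if i + k \<le> K then i + k else i + k - K else i)" for i
  define b where "b i = (if i \<in> {1..K} then (i - 1) mod k + 1 else i)" for i
  define c where "c i = (if i \<le> K then z ^ ((i - 1) div k) else 0)" for i
  have "k \<le> K"
    using assms by (simp add: K_def)
  have "\<tau> permutes {1..K}"
    using \<open>k \<le> K\<close> by (intro inj_imp_permutes) (auto simp: \<tau>_def inj_on_def split: if_splits)
  then have perm: "\<tau> permutes {1..N}"
    by (rule permutes_subset) (use assms in \<open>auto simp: K_def\<close>)
  have shift: "b (\<tau> i) = b i \<and> c (\<tau> i) = z * c i" if "i \<in> {1..N}" for i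
  proof (cases "i \<in> {1..K}")
    case True
    consider "i + k \<le> K" | "K < i + k"
      by linarith
    then show ?thesis
    proof cases
      case 1
      from True obtain j where j: "i = Suc j"
        by (cases i) auto
      have "\<tau> i = i + k" "b i = j mod k + 1" "c i = z ^ (j div k)"
        using True 1 j by (simp_all add: \<tau>_def b_def c_def)
      moreover have "b (i + k) = j mod k + 1" "c (i + k) = z * z ^ (j div k)"
        using 1 j assms(2) by (simp_all add: b_def c_def)
      ultimately show ?thesis
        by simp
    next
      case 2
      define j where "j = i + k - K - 1"
      have "k * (M - 1) = K - k"
        by (simp add: K_def right_diff_distrib')
      then have "i - 1 = j + k * (M - 1)"
        using True 2 \<open>k \<le> K\<close> unfolding j_def by linarith
      moreover have "j < k"
        using True assms(2) unfolding j_def atLeastAtMost_iff by linarith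
      ultimately have "b i = Suc j" "c i = z ^ (M - 1)"
        using True by (simp_all add: b_def c_def)
      moreover have "\<tau> i = Suc j"
        using True 2 by (simp add: \<tau>_def j_def)
      moreover have "b (Suc j) = Suc j" "c (Suc j) = 1"
        using \<open>j < k\<close> \<open>k \<le> K\<close> by (simp_all add: b_def c_def)
      moreover have "z * z ^ (M - 1) = 1"
        using assms(1,3) by (cases M) simp_all
      ultimately show ?thesis
        by simp
    qed
  next
    case False
    then show ?thesis
      using that by (simp add: \<tau>_def b_def c_def)
  qed
  have "b i = i \<and> c i = 1" if "i \<le> k" for i
    using that \<open>k \<le> K\<close> by (auto simp: b_def c_def)
  with perm shift show ?thesis
    by (intro that[of \<tau> b c]) simp_all
qed

lemma exists_primitive_root_of_unity:
  assumes "0 < M"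
  obtains z :: complex where "z ^ M = 1" and "\<And>t. 0 < t \<Longrightarrow> t < M \<Longrightarrow> z ^ t \<noteq> 1"
proof (rule that)
  let ?root = "\<lambda>t. cis (2 * pi * real t / real M)"
  have power: "cis (2 * pi / M) ^ t = ?root t" for t
    by (simp add: DeMoivre mult_ac)
  show "cis (2 * pi / M) ^ M = 1"
    using assms by (simp add: power)
  have "inj_on ?root {..<M}"
    using bij_betw_roots_unity[OF assms] by (simp add: bij_betw_def)
  then show "cis (2 * pi / M) ^ t \<noteq> 1" if "0 < t" "t < M" for t
    using that assms inj_onD[of ?root "{..<M}" t 0] by (auto simp: power)
qed

lemma ILambda_mon_degree_ge:
  assumes "p \<in> ILambda N" and "0 < k"
    and "\<And>l. l \<in> Poly_Mapping.keys p \<Longrightarrow> Poly_Mapping.keys l \<subseteq> {..k}"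
    and "m \<in> Poly_Mapping.keys p"
  shows "N div k \<le> mon_degree m"
proof (cases "N div k = 0")
  case False
  define M where "M = N div k"
  have "0 < M" "k * M \<le> N"
    using False by (simp_all add: M_def)
  obtain z :: complex where z: "z ^ M = 1" "\<And>t. 0 < t \<Longrightarrow> t < M \<Longrightarrow> z ^ t \<noteq> 1"
    using exists_primitive_root_of_unity[OF \<open>0 < M\<close>] by blast
  obtain \<tau> b c where \<tau>: "\<tau> permutes {1..N}"
    and b: "\<And>i. i \<in> {1..N} \<Longrightarrow> b (\<tau> i) = b i"
    and c: "\<And>i. i \<in> {1..N} \<Longrightarrow> c (\<tau> i) = z * c i"
    and fixed: "\<And>i. i \<le> k \<Longrightarrow> b i = i \<and> c i = 1"
    using block_rotation_exists[OF z(1) assms(2) \<open>0 < M\<close> \<open>k * M \<le> N\<close>] by blast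
  have "Poly_Mapping.lookup (subst_poly b c p) m = of_int (Poly_Mapping.lookup p m)"
    using assms(3) fixed by (intro lookup_subst_poly_fixing_vars) blast
  then have "m \<in> Poly_Mapping.keys (subst_poly b c p)"
    using assms(4) by (simp add: in_keys_iff)
  with assms(1) \<tau> b c z(2) show ?thesis
    unfolding M_def[symmetric] by (rule keys_subst_poly_ILambda_mon_degree_ge)
qed simp

lemma poly_vars_bounded:
  fixes p :: "(nat \<Rightarrow>\<^sub>0 'b::zero) \<Rightarrow>\<^sub>0 'c::zero"
  obtains k where "0 < k" and "\<And>l. l \<in> Poly_Mapping.keys p \<Longrightarrow> Poly_Mapping.keys l \<subseteq> {..k}"
proof
  let ?k = "Max (insert 1 (\<Union>l\<in>Poly_Mapping.keys p. Poly_Mapping.keys l))"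
  have fin: "finite (\<Union>l\<in>Poly_Mapping.keys p. Poly_Mapping.keys l)"
    by simp
  then show "0 < ?k"
    by (simp add: Max_gr_iff)
  show "Poly_Mapping.keys l \<subseteq> {..?k}" if "l \<in> Poly_Mapping.keys p" for l
    using fin that by (auto intro!: Max_ge)
qed

lemma zero_in_ILambda: "0 \<in> ILambda N"
  unfolding ILambda_def by (rule CollectI, rule exI[of _ "{}"]) simp

theorem lemma3p3:
  fixes n :: "nat \<Rightarrow> nat"
  assumes "\<And>i. i \<ge> 1 \<Longrightarrow> n i > 0"
    and "filterlim n at_top sequentially"
  shows "(\<Inter>i\<in>{1..}. ILambda (n i)) = {0}"
proof -
  have "p = 0" if p: "\<And>i. i \<ge> 1 \<Longrightarrow> p \<in> ILambda (n i)" for p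
  proof (rule ccontr)
    assume "p \<noteq> 0"
    then obtain m where m: "m \<in> Poly_Mapping.keys p"
      by fastforce
    obtain k where "0 < k"
      and vars: "\<And>l. l \<in> Poly_Mapping.keys p \<Longrightarrow> Poly_Mapping.keys l \<subseteq> {..k}"
      using poly_vars_bounded[of p] by blast
    obtain i0 where "\<forall>i\<ge>i0. k * (mon_degree m + 1) \<le> n i"
      using assms(2) unfolding filterlim_at_top eventually_sequentially by blast
    then have "(mon_degree m + 1) * k \<le> n (Suc i0)"
      by (simp add: mult.commute)
    then have "mon_degree m + 1 \<le> n (Suc i0) div k"
      using \<open>0 < k\<close> by (simp only: less_eq_div_iff_mult_less_eq)
    have "p \<in> ILambda (n (Suc i0))"
      using p by simp
    then have "n (Suc i0) div k \<le> mon_degree m"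
      using \<open>0 < k\<close> vars m by (rule ILambda_mon_degree_ge)
    with \<open>mon_degree m + 1 \<le> n (Suc i0) div k\<close> show False
      by simp
  qed
  then show ?thesis
    using zero_in_ILambda by blast
qed

end
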